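(* Let $V:\mathbb{R}^3\to\mathbb{R}$ satisfy \[ \int_{\mathbb{R}^3\times\mathbb{R}^3}\frac{|V(x)||V(y)|}{|x-y|^2}\,dx\,dy<(4\pi)^2,\qquad \|V\|_{\mathcal K}:=\sup_{x\in\mathbb{R}^3}\int_{\mathbb{R}^3}\frac{|V(y)|}{|x-y|}\,dy<4\pi . \] Then for every positive integer $k$, \[ \sup_{x_0,x_{k+1}\in\mathbb{R}^3}\int_{\mathbb{R}^{3k}}\frac{\prod_{j=1}^k|V(x_j)|}{\prod_{j=0}^k|x_j-x_{j+1}|}\sum_{\ell=0}^k|x_\ell-x_{\ell+1}|\,dx_1\cdots dx_k\le(k+1)\|V\|_{\mathcal K}^k . \] *)

theory Defs
  imports "HOL-Analysis.Analysis"
begin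

definition kato_norm :: "(real^3 \<Rightarrow> real) \<Rightarrow> ennreal" where
  "kato_norm V = (SUP x. \<integral>\<^sup>+ y. ennreal (\<bar>V y\<bar> / dist x y) \<partial>lborel)"

definition chain_pt :: "nat \<Rightarrow> real^3 \<Rightarrow> real^3 \<Rightarrow> (nat \<Rightarrow> real^3) \<Rightarrow> nat \<Rightarrow> real^3" where
  "chain_pt k x0 xk1 xs j = (if j = 0 then x0 else if j = k + 1 then xk1 else xs j)"

definition chain_integral :: "(real^3 \<Rightarrow> real) \<Rightarrow> nat \<Rightarrow> real^3 \<Rightarrow> real^3 \<Rightarrow> ennreal" where
  "chain_integral V k x0 xk1 =
     (\<integral>\<^sup>+ xs. ennreal ((\<Prod>j\<in>{1..k}. \<bar>V (xs j)\<bar>)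
          / (\<Prod>j\<in>{0..k}. dist (chain_pt k x0 xk1 xs j) (chain_pt k x0 xk1 xs (j + 1)))
          * (\<Sum>l\<in>{0..k}. dist (chain_pt k x0 xk1 xs l) (chain_pt k x0 xk1 xs (l + 1))))
      \<partial>(\<Pi>\<^sub>M j\<in>{1..k}. (lborel :: (real^3) measure)))"

end

theory Submission
  imports Defs
begin

(* Divide the product of the k + 1 edge lengths |x_l - x_(l+1)| by one edge at a time: the
   l-th term of the sum cancels edge l, which cuts the chain into two paths hanging from the fixed
   endpoints x_0 and x_(k+1), and every inner point x_j keeps exactly the edge to its neighbour on
   the side of its endpoint.  Integrating the points out from the cut towards the endpoints, each
   single integral of |V y| / |x - y| is at most the Kato norm, so each of the k + 1 terms
   contributes at most the k-th power of the Kato norm. *)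

definition pinned :: "'i set \<Rightarrow> ('i \<Rightarrow> 'a) \<Rightarrow> ('i \<Rightarrow> 'a) \<Rightarrow> 'i \<Rightarrow> 'a" where
  "pinned I c xs m = (if m \<in> I then xs m else c m)"

lemma measurable_pinned [measurable]:
  assumes "c m \<in> space M"
  shows "(\<lambda>xs. pinned I c xs m) \<in> measurable (Pi\<^sub>M I (\<lambda>_. M)) M"
  using assms by (cases "m \<in> I") (simp_all add: pinned_def)

lemma pinned_in_space:
  "xs \<in> space (Pi\<^sub>M I (\<lambda>_. M)) \<Longrightarrow> c m \<in> space M \<Longrightarrow> pinned I c xs m \<in> space M"
  by (auto simp: pinned_def space_PiM)

lemma pinned_insert_upd:
  "m \<noteq> i \<Longrightarrow> pinned (insert i I) c (xs(i := y)) m = pinned I c xs m"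
  by (simp add: pinned_def)

text \<open>A variable of maximal rank is nobody's parent, so it can be integrated out first.\<close>
lemma nn_integral_kernel_tree_le:
  fixes M :: "'a measure" and G :: "'a \<Rightarrow> 'a \<Rightarrow> ennreal" and rank :: "'i \<Rightarrow> nat"
  assumes "sigma_finite_measure M"
    and G_meas [measurable]: "case_prod G \<in> borel_measurable (M \<Otimes>\<^sub>M M)"
    and G_int: "\<And>x. x \<in> space M \<Longrightarrow> (\<integral>\<^sup>+ y. G x y \<partial>M) \<le> C"
    and c: "\<And>m. c m \<in> space M"
    and "finite I" and rank: "\<And>i. i \<in> I \<Longrightarrow> rank (par i) < rank i"
  shows "(\<integral>\<^sup>+ xs. (\<Prod>i\<in>I. G (pinned I c xs (par i)) (xs i)) \<partial>Pi\<^sub>M I (\<lambda>_. M)) \<le> C ^ card I"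
  using \<open>finite I\<close> rank
proof (induction I rule: finite_ranking_induct[where f = rank])
  case empty
  then show ?case by (simp add: PiM_empty)
next
  case (insert i I)
  show ?case
  proof (cases "i \<in> I")
    case True
    then show ?thesis using insert by (simp add: insert_absorb)
  next
    case i_new: False
    interpret product_sigma_finite "\<lambda>_. M"
      using \<open>sigma_finite_measure M\<close> by (simp add: product_sigma_finite_def)
    define P where "P xs = (\<Prod>j\<in>I. G (pinned I c xs (par j)) (xs j))" for xs
    have [measurable]: "P \<in> borel_measurable (Pi\<^sub>M I (\<lambda>_. M))"
      unfolding P_def using c by measurable
    have par_ne: "par j \<noteq> i" if "j \<in> insert i I" for j
      using insert.prems[OF that] insert.hyps(2) that by (metis insertE leD order.refl)
    have split: "(\<Prod>j\<in>insert i I. G (pinned (insert i I) c (xs(i := y)) (par j)) ((xs(i := y)) j))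
        = G (pinned I c xs (par i)) y * P xs" for xs y
      unfolding P_def using insert.hyps(1) i_new par_ne
      by (auto simp: pinned_insert_upd intro!: arg_cong2[where f = "(*)"] prod.cong)
    have "(\<integral>\<^sup>+ xs. (\<Prod>j\<in>insert i I. G (pinned (insert i I) c xs (par j)) (xs j)) \<partial>Pi\<^sub>M (insert i I) (\<lambda>_. M))
        = (\<integral>\<^sup>+ xs. (\<integral>\<^sup>+ y. G (pinned I c xs (par i)) y \<partial>M) * P xs \<partial>Pi\<^sub>M I (\<lambda>_. M))"
      using insert.hyps(1) i_new c
      by (subst product_nn_integral_insert)
        (auto simp only: split intro!: nn_integral_cong nn_integral_multc pinned_in_space
          measurable_Pair2[OF G_meas, simplified], measurable)
    also have "\<dots> \<le> (\<integral>\<^sup>+ xs. C * P xs \<partial>Pi\<^sub>M I (\<lambda>_. M))"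
      using c by (intro nn_integral_mono mult_right_mono G_int pinned_in_space) auto
    also have "\<dots> = C * (\<integral>\<^sup>+ xs. P xs \<partial>Pi\<^sub>M I (\<lambda>_. M))"
      by (simp add: nn_integral_cmult)
    also have "\<dots> \<le> C * C ^ card I"
      unfolding P_def using insert.prems by (intro mult_left_mono insert.IH) auto
    also have "\<dots> = C ^ card (insert i I)"
      using insert.hyps(1) i_new by simp
    finally show ?thesis .
  qed
qed

lemma prod_drop_one_factor_reindex:
  fixes d :: "nat \<Rightarrow> 'a::comm_monoid_mult"
  assumes "l \<le> k"
  shows "(\<Prod>j\<in>{1..k}. d (if j \<le> l then j - 1 else j)) = (\<Prod>m\<in>{0..k} - {l}. d m)"
proof -
  have "bij_betw (\<lambda>j. if j \<le> l then j - 1 else j) {1..k} ({0..k} - {l})"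
    by (rule bij_betw_byWitness[where f' = "\<lambda>m. if m < l then m + 1 else m"]) (use assms in auto)
  then show ?thesis
    by (rule prod.reindex_bij_betw)
qed

text \<open>An equality unless some \<open>d m\<close> vanishes, in which case the left side is
  \<open>0\<close> by the convention \<open>x / 0 = 0\<close>.\<close>
lemma prod_div_prod_mult_sum_le:
  fixes v d :: "nat \<Rightarrow> real"
  assumes v: "\<And>j. v j \<ge> 0" and d: "\<And>m. d m \<ge> 0"
  shows "(\<Prod>j\<in>{1..k}. v j) / (\<Prod>m\<in>{0..k}. d m) * (\<Sum>l\<in>{0..k}. d l)
     \<le> (\<Sum>l\<in>{0..k}. \<Prod>j\<in>{1..k}. v j / d (if j \<le> l then j - 1 else j))"
proof (cases "\<exists>m\<in>{0..k}. d m = 0")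
  case True
  then have no_edge: "(\<Prod>m\<in>{0..k}. d m) = 0"
    by simp
  show ?thesis
    unfolding no_edge using v d by (simp add: sum_nonneg prod_nonneg)
next
  case False
  have "(\<Prod>j\<in>{1..k}. v j) / (\<Prod>m\<in>{0..k}. d m) * d l
      = (\<Prod>j\<in>{1..k}. v j / d (if j \<le> l then j - 1 else j))" if l: "l \<in> {0..k}" for l
  proof -
    have "(\<Prod>m\<in>{0..k}. d m) = d l * (\<Prod>m\<in>{0..k} - {l}. d m)"
      using l by (simp add: prod.remove)
    moreover have "(\<Prod>m\<in>{0..k} - {l}. d m) = (\<Prod>j\<in>{1..k}. d (if j \<le> l then j - 1 else j))"
      using l by (intro prod_drop_one_factor_reindex[symmetric]) simp
    ultimately show ?thesis
      using False l by (simp add: prod_dividef)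
  qed
  then show ?thesis
    by (simp add: sum_distrib_left)
qed

definition kato_kernel :: "('a::metric_space \<Rightarrow> real) \<Rightarrow> 'a \<Rightarrow> 'a \<Rightarrow> ennreal" where
  "kato_kernel V x y = ennreal (\<bar>V y\<bar> / dist x y)"

lemma measurable_kato_kernel [measurable]:
  fixes V :: "'a::euclidean_space \<Rightarrow> real"
  assumes [measurable]: "V \<in> borel_measurable lborel"
  shows "case_prod (kato_kernel V) \<in> borel_measurable (lborel \<Otimes>\<^sub>M lborel)"
  unfolding kato_kernel_def by measurable

lemma nn_integral_kato_kernel_le: "(\<integral>\<^sup>+ y. kato_kernel V x y \<partial>lborel) \<le> kato_norm V"
  unfolding kato_kernel_def kato_norm_def by (rule SUP_upper) simp

text \<open>The parent of the inner point \<open>j\<close> in the tree obtained by cutting the chain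
  between the points \<open>l\<close> and \<open>l + 1\<close>.\<close>
definition chain_parent :: "nat \<Rightarrow> nat \<Rightarrow> nat" where
  "chain_parent l j = (if j \<le> l then j - 1 else j + 1)"

lemma chain_integrand_le:
  fixes V :: "real^3 \<Rightarrow> real"
  shows "ennreal ((\<Prod>j\<in>{1..k}. \<bar>V (xs j)\<bar>)
          / (\<Prod>j\<in>{0..k}. dist (chain_pt k x0 xk1 xs j) (chain_pt k x0 xk1 xs (j + 1)))
          * (\<Sum>l\<in>{0..k}. dist (chain_pt k x0 xk1 xs l) (chain_pt k x0 xk1 xs (l + 1))))
    \<le> (\<Sum>l\<in>{0..k}. \<Prod>j\<in>{1..k}.
          kato_kernel V (pinned {1..k} (\<lambda>m. if m = 0 then x0 else xk1) xs (chain_parent l j)) (xs j))"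
proof -
  define pt where "pt = chain_pt k x0 xk1 xs"
  define d where "d m = dist (pt m) (pt (m + 1))" for m
  have kernel_eq: "kato_kernel V (pinned {1..k} (\<lambda>m. if m = 0 then x0 else xk1) xs (chain_parent l j)) (xs j)
      = ennreal (\<bar>V (xs j)\<bar> / d (if j \<le> l then j - 1 else j))" if "j \<in> {1..k}" for l j
    using that by (cases "j \<le> l")
      (auto simp: kato_kernel_def pinned_def chain_parent_def d_def pt_def chain_pt_def dist_commute)
  have "ennreal ((\<Prod>j\<in>{1..k}. \<bar>V (xs j)\<bar>) / (\<Prod>m\<in>{0..k}. d m) * (\<Sum>l\<in>{0..k}. d l))
      \<le> ennreal (\<Sum>l\<in>{0..k}. \<Prod>j\<in>{1..k}. \<bar>V (xs j)\<bar> / d (if j \<le> l then j - 1 else j))"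
    by (intro ennreal_leI prod_div_prod_mult_sum_le) (simp_all add: d_def)
  also have "\<dots> = (\<Sum>l\<in>{0..k}. \<Prod>j\<in>{1..k}. ennreal (\<bar>V (xs j)\<bar> / d (if j \<le> l then j - 1 else j)))"
    by (simp add: d_def prod_nonneg sum_nonneg flip: sum_ennreal prod_ennreal)
  also have "\<dots> = (\<Sum>l\<in>{0..k}. \<Prod>j\<in>{1..k}.
      kato_kernel V (pinned {1..k} (\<lambda>m. if m = 0 then x0 else xk1) xs (chain_parent l j)) (xs j))"
    by (intro sum.cong prod.cong refl) (simp only: kernel_eq)
  finally show ?thesis
    unfolding d_def pt_def .
qed

lemma chain_integral_le:
  assumes [measurable]: "V \<in> borel_measurable lborel"
  shows "chain_integral V k x0 xk1 \<le> ennreal (real (k + 1)) * kato_norm V ^ k"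
proof -
  define F where "F l xs = (\<Prod>j\<in>{1..k}.
      kato_kernel V (pinned {1..k} (\<lambda>m. if m = 0 then x0 else xk1) xs (chain_parent l j)) (xs j))" for l xs
  have [measurable]: "F l \<in> borel_measurable (Pi\<^sub>M {1..k} (\<lambda>_. lborel))" for l
    unfolding F_def by measurable
  have F_le: "(\<integral>\<^sup>+ xs. F l xs \<partial>Pi\<^sub>M {1..k} (\<lambda>_. lborel)) \<le> kato_norm V ^ k" for l
    unfolding F_def
    by (rule order_trans[OF nn_integral_kernel_tree_le[where rank = "\<lambda>j. if j \<le> l then j else k + 2 - j"]])
      (auto simp: nn_integral_kato_kernel_le chain_parent_def lborel.sigma_finite_measure_axioms)
  have "chain_integral V k x0 xk1 \<le> (\<integral>\<^sup>+ xs. (\<Sum>l\<in>{0..k}. F l xs) \<partial>Pi\<^sub>M {1..k} (\<lambda>_. lborel))"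
    unfolding chain_integral_def F_def by (intro nn_integral_mono chain_integrand_le)
  also have "\<dots> = (\<Sum>l\<in>{0..k}. \<integral>\<^sup>+ xs. F l xs \<partial>Pi\<^sub>M {1..k} (\<lambda>_. lborel))"
    by (rule nn_integral_sum) measurable
  also have "\<dots> \<le> (\<Sum>l\<in>{0..k}. kato_norm V ^ k)"
    by (intro sum_mono F_le)
  also have "\<dots> = ennreal (real (k + 1)) * kato_norm V ^ k"
    by (simp add: ennreal_of_nat_eq_real_of_nat)
  finally show ?thesis .
qed

theorem lemma2p5:
  fixes V :: "real^3 \<Rightarrow> real" and k :: nat
  assumes meas: "V \<in> borel_measurable lborel"
    and h1: "(\<integral>\<^sup>+ p. ennreal (\<bar>V (fst p)\<bar> * \<bar>V (snd p)\<bar> / (dist (fst p) (snd p))\<^sup>2)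
              \<partial>((lborel :: (real^3) measure) \<Otimes>\<^sub>M (lborel :: (real^3) measure)))
             < ennreal ((4 * pi)\<^sup>2)"
    and h2: "kato_norm V < ennreal (4 * pi)"
    and k: "k \<ge> 1"
  shows "(SUP x0. SUP xk1. chain_integral V k x0 xk1) \<le> ennreal (real (k + 1)) * kato_norm V ^ k"
  using chain_integral_le[OF meas] by (intro SUP_least)

end
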